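(* Let $(P,Q)$ be a quasi-projection pair on a Hilbert $C^*$-module $H$. Then $$\|(I-P)Q\|=\|Q(I-P)\|,\qquad \|(I-Q)P\|=\|P(I-Q)\|,$$ and $$\big\|(P-Q)^2\big\|\le\max\big\{\|(I-P)Q\|,\|(I-Q)P\|\big\}\le\|P-Q\|.$$
   Context: $H$ is a Hilbert module over a $C^*$-algebra, $\mathcal{L}(H)$ the adjointable operators. A quasi-projection pair is $(P,Q)$ with $P\in\mathcal{L}(H)$ a projection (self-adjoint idempotent), $Q\in\mathcal{L}(H)$ an idempotent, and $Q^*=(2P-I)Q(2P-I)$. *)

theory Defs
  imports Complex_Main
begin

text \<open>Unital C*-algebras (complex Banach *-algebras with unit satisfying the C*-identity).
  The algebra of adjointable operators on a Hilbert C*-module is such an algebra, and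
  every unital C*-algebra A arises this way (A = L(A_A)).\<close>

class cstar_algebra = banach + real_normed_algebra_1 +
  fixes scaleC :: "complex \<Rightarrow> 'a \<Rightarrow> 'a"
    and adj :: "'a \<Rightarrow> 'a"
  assumes scaleC_add_left: "scaleC (a + b) x = scaleC a x + scaleC b x"
    and scaleC_add_right: "scaleC a (x + y) = scaleC a x + scaleC a y"
    and scaleC_scaleC: "scaleC a (scaleC b x) = scaleC (a * b) x"
    and scaleC_one: "scaleC 1 x = x"
    and scaleR_scaleC: "scaleR r x = scaleC (complex_of_real r) x"
    and scaleC_mult_left: "scaleC a (x * y) = scaleC a x * y"
    and scaleC_mult_right: "scaleC a (x * y) = x * scaleC a y"
    and norm_scaleC: "norm (scaleC a x) = cmod a * norm x"
    and adj_adj: "adj (adj x) = x"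
    and adj_add: "adj (x + y) = adj x + adj y"
    and adj_mult: "adj (x * y) = adj y * adj x"
    and adj_scaleC: "adj (scaleC a x) = scaleC (cnj a) (adj x)"
    and cstar_identity: "norm (adj x * x) = (norm x)\<^sup>2"

definition projection :: "'a::cstar_algebra \<Rightarrow> bool" where
  "projection P \<longleftrightarrow> adj P = P \<and> P * P = P"

definition idempotent :: "'a::cstar_algebra \<Rightarrow> bool" where
  "idempotent Q \<longleftrightarrow> Q * Q = Q"

definition quasi_projection_pair :: "'a::cstar_algebra \<Rightarrow> 'a \<Rightarrow> bool" where
  "quasi_projection_pair P Q \<longleftrightarrow> projection P \<and> idempotent Q \<and>
     adj Q = (2 * P - 1) * Q * (2 * P - 1)"

end

theory Submission imports Defs begin

text \<open>The symmetry \<open>S = 2P - 1\<close> is self-adjoint with \<open>S\<^sup>2 = 1\<close>, so multiplication by it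
  preserves norms. The relation \<open>Q\<^sup>* = SQS\<close> turns \<open>((1-P)Q)\<^sup>*\<close> into \<open>-SQ(1-P)\<close> and
  \<open>((1-Q)P)\<^sup>*\<close> into \<open>P(1-Q)S\<close>, and the adjoint is isometric: this gives the two equalities.
  For idempotents \<open>(P-Q)\<^sup>2 = P(1-Q)P + (1-P)Q(1-P)\<close>, a sum \<open>A + B\<close> with \<open>A\<^sup>*B = AB\<^sup>* = 0\<close>.
  For such a pair the C*-identity gives \<open>\<parallel>A+B\<parallel>^(2^k) \<le> \<parallel>A\<parallel>^(2^k) + \<parallel>B\<parallel>^(2^k)\<close> for all \<open>k\<close>,
  hence \<open>\<parallel>A+B\<parallel> \<le> max \<parallel>A\<parallel> \<parallel>B\<parallel>\<close>. Finally \<open>(1-P)Q = (1-P)(Q-P)\<close> and \<open>P(1-Q) = P(P-Q)\<close>.\<close>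

lemma adj_zero [simp]: "adj (0::'a::cstar_algebra) = 0"
  by (metis add_cancel_right_right adj_add)

lemma adj_minus: "adj (- x::'a::cstar_algebra) = - adj x"
  by (metis adj_add adj_zero add.left_inverse eq_neg_iff_add_eq_0)

lemma adj_diff: "adj (x - y::'a::cstar_algebra) = adj x - adj y"
  by (metis adj_add adj_minus diff_conv_add_uminus)

lemma adj_one [simp]: "adj (1::'a::cstar_algebra) = 1"
  by (metis adj_adj adj_mult mult.right_neutral)

lemma adj_power: "adj (x ^ n::'a::cstar_algebra) = adj x ^ n"
  by (induction n) (simp_all add: adj_mult power_commutes)

lemma norm_adj [simp]: "norm (adj x) = norm (x::'a::cstar_algebra)"
proof -
  have le: "norm y \<le> norm (adj y)" for y :: 'a
  proof (cases "y = 0")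
    case False
    have "norm y * norm y = norm (adj y * y)" by (simp add: cstar_identity power2_eq_square)
    also have "\<dots> \<le> norm (adj y) * norm y" by (rule norm_mult_ineq)
    finally show ?thesis using False by simp
  qed simp
  show ?thesis using le[of x] le[of "adj x"] by (simp add: adj_adj)
qed

lemma norm_power_two_power_selfadjoint:
  fixes T :: "'a::cstar_algebra"
  assumes "adj T = T"
  shows "norm (T ^ 2 ^ k) = norm T ^ 2 ^ k"
proof (induction k)
  case (Suc k)
  have "T ^ 2 ^ Suc k = adj (T ^ 2 ^ k) * T ^ 2 ^ k"
    by (simp add: adj_power assms mult_2 flip: power_add)
  then show ?case by (simp add: cstar_identity Suc mult.commute flip: power_mult)
qed simp

lemma norm_le_one_projection:
  assumes "projection (P::'a::cstar_algebra)"
  shows "norm P \<le> 1"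
proof -
  have "norm P * norm P = norm P"
    using assms cstar_identity[of P] by (simp add: projection_def power2_eq_square)
  then show ?thesis by (metis mult_cancel_right1 norm_ge_zero order_refl zero_le_one)
qed

lemma projection_one_minus:
  "projection (P::'a::cstar_algebra) \<Longrightarrow> projection (1 - P)"
  by (simp add: projection_def adj_diff algebra_simps)

lemma norm_mult_le_of_norm_le_one:
  fixes S X :: "'a::cstar_algebra"
  assumes "norm S \<le> 1"
  shows "norm (S * X) \<le> norm X" and "norm (X * S) \<le> norm X"
  using assms norm_mult_ineq[of S X] norm_mult_ineq[of X S]
  by (metis mult_left_le_one_le norm_ge_zero order.trans,
      metis mult_right_le_one_le norm_ge_zero order.trans)

lemma norm_mult_selfadjoint_involution:
  fixes S X :: "'a::cstar_algebra"
  assumes "adj S = S" and "S * S = 1"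
  shows "norm (S * X) = norm X" and "norm (X * S) = norm X"
proof -
  have "norm S ^ 2 = 1" by (metis assms cstar_identity norm_one)
  then have S: "norm S \<le> 1" by (auto simp: power2_eq_1_iff)
  have "norm X = norm (S * (S * X))" by (simp add: assms flip: mult.assoc)
  then show "norm (S * X) = norm X"
    using norm_mult_le_of_norm_le_one[OF S] by (metis antisym)
  have "norm X = norm (X * S * S)" by (simp add: assms mult.assoc)
  then show "norm (X * S) = norm X"
    using norm_mult_le_of_norm_le_one[OF S] by (metis antisym)
qed

lemma le_of_power_two_power_le_const_mult:
  fixes x y c :: real
  assumes "0 \<le> y" and bound: "\<And>k. x ^ 2 ^ k \<le> c * y ^ 2 ^ k"
  shows "x \<le> y"
proof (rule ccontr)
  assume "\<not> x \<le> y"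
  then have "y < x" by simp
  show False
  proof (cases "y = 0")
    case True
    then show False using bound[of 0] \<open>y < x\<close> by simp
  next
    case False
    with assms have "0 < y" by simp
    define r where "r = x / y"
    have "1 < r" using \<open>y < x\<close> \<open>0 < y\<close> by (simp add: r_def)
    then obtain n where "c < r ^ n" using real_arch_pow by blast
    also have "r ^ n \<le> r ^ 2 ^ n" using \<open>1 < r\<close> by (simp add: less_imp_le)
    also have "r ^ 2 ^ n \<le> c"
      using bound[of n] \<open>0 < y\<close> by (simp add: r_def power_divide divide_le_eq)
    finally show False by simp
  qed
qed

lemma power_add_of_mult_eq_zero:
  fixes C D :: "'a::semiring_1"
  assumes "C * D = 0" and "D * C = 0" and "0 < n"
  shows "(C + D) ^ n = C ^ n + D ^ n"
  using \<open>0 < n\<close>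
proof (induction n rule: nat_induct_non_zero)
  case (Suc n)
  obtain m where "n = Suc m" using \<open>0 < n\<close> not0_implies_Suc by blast
  then have "C ^ n * D = 0" "D ^ n * C = 0"
    using assms by (simp_all add: power_Suc2 mult.assoc del: power_Suc)
  then show ?case
    by (simp add: Suc.IH distrib_left distrib_right power_Suc2 flip: power_Suc)
qed simp

lemma norm_add_le_max_of_orthogonal:
  fixes A B :: "'a::cstar_algebra"
  assumes AB: "adj A * B = 0" and AB': "A * adj B = 0"
  shows "norm (A + B) \<le> max (norm A) (norm B)"
proof -
  have BA: "adj B * A = 0" and BA': "B * adj A = 0"
    using arg_cong[OF AB, of adj] arg_cong[OF AB', of adj] by (simp_all add: adj_mult adj_adj)
  define C D where "C = adj A * A" and "D = adj B * B"
  have "C * D = adj A * (A * adj B) * B" "D * C = adj B * (B * adj A) * A"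
    by (simp_all add: C_def D_def mult.assoc)
  then have CD: "C * D = 0" "D * C = 0" by (simp_all add: AB' BA')
  have sum: "adj (A + B) * (A + B) = C + D"
    by (simp add: C_def D_def adj_add distrib_left distrib_right AB BA)
  have selfadj: "adj C = C" "adj D = D" "adj (C + D) = C + D"
    by (simp_all add: C_def D_def adj_mult adj_adj adj_add)
  let ?m = "max (norm A) (norm B)"
  have "norm (A + B) ^ 2 ^ k \<le> 2 * ?m ^ 2 ^ k" for k
  proof (cases k)
    case 0
    then show ?thesis using norm_triangle_ineq[of A B] by simp
  next
    case (Suc j)
    have "norm (A + B) ^ 2 ^ k = norm (C + D) ^ 2 ^ j"
      by (simp add: Suc power_mult flip: cstar_identity sum)
    also have "\<dots> = norm (C ^ 2 ^ j + D ^ 2 ^ j)"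
      by (simp add: power_add_of_mult_eq_zero CD
          flip: norm_power_two_power_selfadjoint[OF selfadj(3)])
    also have "\<dots> \<le> norm C ^ 2 ^ j + norm D ^ 2 ^ j"
      using norm_triangle_ineq[of "C ^ 2 ^ j" "D ^ 2 ^ j"]
      by (simp add: norm_power_two_power_selfadjoint selfadj)
    also have "\<dots> = norm A ^ 2 ^ k + norm B ^ 2 ^ k"
      by (simp add: C_def D_def Suc cstar_identity power_mult)
    also have "\<dots> \<le> 2 * ?m ^ 2 ^ k"
      using power_mono[of "norm A" ?m "2 ^ k"] power_mono[of "norm B" ?m "2 ^ k"] by simp
    finally show ?thesis .
  qed
  then show ?thesis by (rule le_of_power_two_power_le_const_mult[rotated]) (simp add: le_max_iff_disj)
qed

lemma square_diff_idempotents: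
  fixes P Q :: "'a::ring_1"
  assumes "P * P = P" and "Q * Q = Q"
  shows "(P - Q) ^ 2 = P * (1 - Q) * P + (1 - P) * Q * (1 - P)"
  using assms by (simp add: power2_eq_square algebra_simps)

lemma norm_square_diff_le_max:
  fixes P Q :: "'a::cstar_algebra"
  assumes P: "projection P" and Q: "idempotent Q"
  shows "norm ((P - Q) ^ 2) \<le> max (norm ((1 - P) * Q)) (norm (P * (1 - Q)))"
proof -
  have PP: "P * P = P" "adj P = P" using P by (simp_all add: projection_def)
  have PP': "P * (1 - P) = 0" "(1 - P) * P = 0" using PP by (simp_all add: algebra_simps)
  define A B where "A = P * (1 - Q) * P" and "B = (1 - P) * Q * (1 - P)"
  have "adj A * B = P * adj (1 - Q) * (P * (1 - P)) * Q * (1 - P)"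
    and "A * adj B = P * (1 - Q) * (P * (1 - P)) * adj Q * (1 - P)"
    by (simp_all add: A_def B_def adj_mult adj_diff PP mult.assoc)
  then have "norm (A + B) \<le> max (norm A) (norm B)"
    by (intro norm_add_le_max_of_orthogonal) (simp_all add: PP')
  moreover have "(P - Q) ^ 2 = A + B"
    using PP Q by (simp add: A_def B_def idempotent_def square_diff_idempotents)
  moreover have "norm A \<le> norm (P * (1 - Q))"
    unfolding A_def by (rule norm_mult_le_of_norm_le_one(2)[OF norm_le_one_projection[OF P]])
  moreover have "norm B \<le> norm ((1 - P) * Q)"
    unfolding B_def
    by (rule norm_mult_le_of_norm_le_one(2)[OF norm_le_one_projection[OF projection_one_minus[OF P]]])
  ultimately show ?thesis by auto
qed

lemma norm_compl_projection_mult_le_norm_diff: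
  fixes P Q :: "'a::cstar_algebra"
  assumes P: "projection P"
  shows "norm ((1 - P) * Q) \<le> norm (P - Q)" and "norm (P * (1 - Q)) \<le> norm (P - Q)"
proof -
  have "P * P = P" using P by (simp add: projection_def)
  then have "(1 - P) * Q = (1 - P) * (Q - P)" and "P * (1 - Q) = P * (P - Q)"
    by (simp_all add: algebra_simps)
  moreover have "norm ((1 - P) * (Q - P)) \<le> norm (P - Q)"
    using norm_mult_le_of_norm_le_one(1)[OF norm_le_one_projection[OF projection_one_minus[OF P]]]
    by (metis norm_minus_commute)
  moreover have "norm (P * (P - Q)) \<le> norm (P - Q)"
    using norm_mult_le_of_norm_le_one(1)[OF norm_le_one_projection[OF P]] .
  ultimately show "norm ((1 - P) * Q) \<le> norm (P - Q)" and "norm (P * (1 - Q)) \<le> norm (P - Q)"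
    by simp_all
qed

lemma reflection_of_projection:
  fixes P :: "'a::cstar_algebra"
  assumes "projection P"
  shows "adj (2 * P - 1) = 2 * P - 1" and "(2 * P - 1) * (2 * P - 1) = 1"
  using assms by (simp_all add: projection_def adj_diff adj_add mult_2 algebra_simps)

lemma quasi_projection_pair_adj_compl_mult:
  fixes P Q :: "'a::cstar_algebra"
  assumes "quasi_projection_pair P Q"
  defines "S \<equiv> 2 * P - 1"
  shows "adj ((1 - P) * Q) = - (S * (Q * (1 - P)))"
    and "adj ((1 - Q) * P) = P * (1 - Q) * S"
proof -
  have P: "adj P = P" "P * P = P" and Q: "adj Q = S * Q * S"
    using assms by (simp_all add: quasi_projection_pair_def projection_def)
  have SP: "S * (1 - P) = - (1 - P)" and PS: "P * S = P"
    using P by (simp_all add: S_def algebra_simps mult_2 mult_2_right)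
  have "adj ((1 - P) * Q) = S * Q * (S * (1 - P))"
    by (simp add: adj_mult adj_diff P Q mult.assoc)
  then show "adj ((1 - P) * Q) = - (S * (Q * (1 - P)))"
    by (simp only: SP mult_minus_right mult.assoc)
  have "adj ((1 - Q) * P) = P - P * S * Q * S"
    by (simp add: adj_mult adj_diff P Q right_diff_distrib mult.assoc)
  also have "\<dots> = P * S - P * Q * S" by (simp only: PS)
  also have "\<dots> = P * (1 - Q) * S" by (simp add: algebra_simps)
  finally show "adj ((1 - Q) * P) = P * (1 - Q) * S" .
qed

lemma quasi_projection_pair_norm_compl_mult_commute:
  fixes P Q :: "'a::cstar_algebra"
  assumes "quasi_projection_pair P Q"
  shows "norm ((1 - P) * Q) = norm (Q * (1 - P))" and "norm ((1 - Q) * P) = norm (P * (1 - Q))"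
proof -
  have "projection P" using assms by (simp add: quasi_projection_pair_def)
  note isometry = norm_mult_selfadjoint_involution[OF reflection_of_projection[OF this]]
  show "norm ((1 - P) * Q) = norm (Q * (1 - P))" and "norm ((1 - Q) * P) = norm (P * (1 - Q))"
    using quasi_projection_pair_adj_compl_mult[OF assms] isometry
    by (metis norm_adj norm_minus_cancel)+
qed

theorem theorem5p13:
  fixes P Q :: "'a::cstar_algebra"
  assumes "quasi_projection_pair P Q"
  shows "norm ((1 - P) * Q) = norm (Q * (1 - P)) \<and>
         norm ((1 - Q) * P) = norm (P * (1 - Q)) \<and>
         norm ((P - Q)^2) \<le> max (norm ((1 - P) * Q)) (norm ((1 - Q) * P)) \<and>
         max (norm ((1 - P) * Q)) (norm ((1 - Q) * P)) \<le> norm (P - Q)"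
proof -
  have P: "projection P" and Q: "idempotent Q"
    using assms by (simp_all add: quasi_projection_pair_def)
  show ?thesis
    using quasi_projection_pair_norm_compl_mult_commute[OF assms]
      norm_square_diff_le_max[OF P Q] norm_compl_projection_mult_le_norm_diff[OF P, of Q]
    by (simp only: max.bounded_iff simp_thms)
qed

end
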